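(* Consider the finite-horizon sensor scheduling problem (Problem 1) described in the context, with horizon $K\in\mathbb{Z}_+$ and trade-off parameter $\gamma>0$. Define $Q_K(\mathcal{M}_K)=\Tr(\Sigma_K)$ and, for $k=K-1,\ldots,0$, the $Q$-functions $$Q_k(\mathcal{M}_k)=\Tr(\Sigma_k)+\sum_{m=1}^M\gamma\Tr(\delta_{m,k}\mathbf{C}_m\mathbf{C}_m^T)+\mathbb{E}\Big[\min_{\pi_{k+1}}Q_{k+1}(\mathcal{M}_{k+1})\,\Big|\,\mathcal{M}_k\Big],$$ where $\mathcal{M}_k=\{\Sigma_k,\mathbf{H}_k,\pi_k\}$, $\Sigma_{k+1}=f(\mathcal{M}_k)+\mathbf{W}$, and the conditional expectation is over the fresh channel realization $\mathbf{H}_{k+1}$ (independent of $\mathcal{M}_k$). Then Problem 1 is optimally solved backward in time by these DP recursions (i.e., choosing $\pi_k$ to minimize $Q_k(\mathcal{M}_k)$ at each $k$), and for every $k=K-1,\ldots,0$, $$Q_k(\mathcal{M}_k)=\Tr(\Sigma_k)+\sum_{m=1}^M\gamma\Tr(\delta_{m,k}\mathbf{C}_m\mathbf{C}_m^T)+\Tr(f(\mathcal{M}_k))+(K-k)\Tr(\mathbf{W})+\Delta_k(\mathcal{M}_k)\mathbf{1}_{k\le K-2},$$ where $\Delta_{K-1}(\mathcal{M}_{K-1})=0$ and, for $k\le K-2$, $$\Delta_k(\mathcal{M}_k)=\mathbb{E}\Big[\min_{\pi_{k+1}}\Big(\sum_{m=1}^M\gamma\Tr(\delta_{m,k+1}\mathbf{C}_m\mathbf{C}_m^T)+\Tr\big(f(f(\mathcal{M}_k)+\mathbf{W},\pi_{k+1},\mathbf{H}_{k+1})\big)+\Delta_{k+1}\big(f(\mathcal{M}_k)+\mathbf{W},\mathbf{H}_{k+1},\pi_{k+1}\big)\Big)\,\Big|\,\mathcal{M}_k\Big].$$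 Moreover, the optimal solution $\pi_k^*=\{\delta^*_{1,k},\ldots,\delta^*_{M,k}\}$ minimizing $Q_k$ is given by $\delta^*_{m,k}=1$ when $$\Tr\big(f(\Sigma_k,\{\delta^*_{-m},\delta_{m,k}=0\},\mathbf{H}_k)\big)+\Delta_k\big(\Sigma_k,\mathbf{H}_k,\{\delta^*_{-m},\delta_{m,k}=0\}\big)-\Tr\big(f(\Sigma_k,\{\delta^*_{-m},\delta_{m,k}=1\},\mathbf{H}_k)\big)-\Delta_k\big(\Sigma_k,\mathbf{H}_k,\{\delta^*_{-m},\delta_{m,k}=1\}\big)\ge\Tr(\gamma\mathbf{C}_m\mathbf{C}_m^T),$$ where $\delta^*_{-m}=\{\delta^*_{i,k}:1\le i\le M,\ i\ne m\}$.
   Context: Plant: $\mathbf{x}_{k+1}=\mathbf{A}\mathbf{x}_k+\mathbf{w}_k$ with $\mathbf{x}_k\in\mathbb{R}^{S}$, known $\mathbf{A}\in\mathbb{R}^{S\times S}$, and i.i.d. $\mathbf{w}_k\sim\mathcal{N}(\mathbf{0},\mathbf{W})$ with $\mathbf{W}$ positive definite. There are $M$ sensors; sensor $m$ has $N_t$ transmit antennas and observation matrix $\mathbf{C}_m\in\mathbb{R}^{N_t\times S}$, measuring $\mathbf{z}_{m,k}=\mathbf{C}_m\mathbf{x}_k$. The receiver has $N_r$ antennas and receives $\mathbf{y}_k=\sum_{m=1}^M\delta_{m,k}\mathbf{H}_{m,k}\mathbf{z}_{m,k}+\mathbf{v}_k$, with $\mathbf{v}_k\sim\mathcal{N}(\mathbf{0},\mathbf{I}_{N_r})$,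 scheduling variables $\delta_{m,k}\in\{0,1\}$, and channel matrices $\mathbf{H}_{m,k}\in\mathbb{R}^{N_r\times N_t}$ whose entries are i.i.d. $\mathcal{N}(0,1)$, independent across sensors and time slots. Write $\mathbf{H}_k=\{\mathbf{H}_{1,k},\ldots,\mathbf{H}_{M,k}\}$, $\pi_k=\{\delta_{1,k},\ldots,\delta_{M,k}\}$, $\bar{\mathbf{H}}_{m,k}=\mathbf{H}_{m,k}\mathbf{C}_m$. For a positive definite $\Sigma$, define $$f(\Sigma,\pi_k,\mathbf{H}_k)=\mathbf{A}\Big(\Sigma^{-1}+\big(\textstyle\sum_{m=1}^M\delta_{m,k}\bar{\mathbf{H}}_{m,k}\big)^T\big(\sum_{m=1}^M\delta_{m,k}\bar{\mathbf{H}}_{m,k}\big)\Big)^{-1}\mathbf{A}^T,$$ and write $f(\mathcal{M}_k)$ for $f(\Sigma_k,\pi_k,\mathbf{H}_k)$ when $\mathcal{M}_k=\{\Sigma_k,\mathbf{H}_k,\pi_k\}$. The Kalman-filter prior error covariance evolves as $\Sigma_{k+1}=f(\Sigma_k,\pi_k,\mathbf{H}_k)+\mathbf{W}$, starting from a given positive definite $\Sigma_0$. Problem 1: over scheduling policies $\pi=\{\pi_0,\ldots,\pi_{K-1}\}$ (with $\pi_k$ chosen based on $\Sigma_k$ and $\mathbf{H}_k$), minimize $$\mathbb{E}\Big[\sum_{k=0}^{K-1}\Big(\Tr(\Sigma_k)+\sum_{m=1}^M\gamma\Tr(\delta_{m,k}\mathbf{C}_m\mathbf{C}_m^T)\Big)+\Tr(\Sigma_K)\Big],$$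 where $\gamma>0$ trades off estimation accuracy against transmit power. $\mathbf{1}_{\{\cdot\}}$ is the indicator function. *)

theory Defs
  imports "HOL-Analysis.Analysis" "HOL-Probability.Probability"
begin

text \<open>Dimensions are types: state dimension S = CARD('s), transmit antennas
  N_t = CARD('t), receive antennas N_r = CARD('r), sensors M = CARD('m).
  A schedule pi_k is a function 'm => bool (delta_{m,k} = of_bool (pi m)).
  A channel realisation H_k is a function 'm => real^'t^'r (N_r x N_t matrices).
  Observation matrices C_m :: real^'s^'t (N_t x S).\<close>

definition pd_mat :: "real^'n^'n \<Rightarrow> bool" where
  "pd_mat S \<longleftrightarrow> transpose S = S \<and> (\<forall>x. x \<noteq> 0 \<longrightarrow> 0 < x \<bullet> (S *v x))"

definition eff_chan ::
  "('m::finite \<Rightarrow> real^'s^'t) \<Rightarrow> ('m \<Rightarrow> bool) \<Rightarrow> ('m \<Rightarrow> real^'t^'r) \<Rightarrow> real^'s^'r" where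
  "eff_chan C p H = (\<Sum>m\<in>UNIV. of_bool (p m) *\<^sub>R (H m ** C m))"

definition fmap ::
  "real^'s^'s \<Rightarrow> ('m::finite \<Rightarrow> real^'s^'t) \<Rightarrow> real^'s^'s \<Rightarrow> ('m \<Rightarrow> bool)
     \<Rightarrow> ('m \<Rightarrow> real^'t^'r) \<Rightarrow> real^'s^'s" where
  "fmap A C S p H =
     A ** matrix_inv (matrix_inv S + transpose (eff_chan C p H) ** eff_chan C p H) ** transpose A"

definition sched_cost :: "real \<Rightarrow> ('m::finite \<Rightarrow> real^'s^'t) \<Rightarrow> ('m \<Rightarrow> bool) \<Rightarrow> real" where
  "sched_cost \<gamma> C p = (\<Sum>m\<in>UNIV. \<gamma> * trace (of_bool (p m) *\<^sub>R (C m ** transpose (C m))))"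

definition chan_space :: "('m::finite \<Rightarrow> real^'t^'r) measure" where
  "chan_space = PiM UNIV (\<lambda>_. borel)"

definition gauss_chan :: "('m::finite \<Rightarrow> real^'t^'r) measure" where
  "gauss_chan =
     distr (PiM UNIV (\<lambda>_::'m \<times> 'r \<times> 't. density lborel std_normal_density))
           chan_space (\<lambda>g m. \<chi> i j. g (m, i, j))"

text \<open>Q-functions, indexed by the number n = K - k of remaining steps:
  Qr 0 = Q_K and Qr (Suc n) realises the recursion for Q_k with n = K - k - 1.
  The conditional expectation given M_k is the integral over the fresh channel
  H_{k+1} ~ gauss_chan, with Sigma_{k+1} = f(M_k) + W.\<close>
fun Qr :: "real^'s^'s \<Rightarrow> real^'s^'s \<Rightarrow> ('m::finite \<Rightarrow> real^'s^'t) \<Rightarrow> real \<Rightarrow> nat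
    \<Rightarrow> real^'s^'s \<Rightarrow> ('m \<Rightarrow> real^'t^'r) \<Rightarrow> ('m \<Rightarrow> bool) \<Rightarrow> real" where
  "Qr A W C \<gamma> 0 S H p = trace S"
| "Qr A W C \<gamma> (Suc n) S H p =
     trace S + sched_cost \<gamma> C p +
     (\<integral>H'. Min (range (\<lambda>p'. Qr A W C \<gamma> n (fmap A C S p H + W) H' p')) \<partial>gauss_chan)"

text \<open>Q_k for horizon K (meaningful for k <= K).\<close>
definition Qfun :: "real^'s^'s \<Rightarrow> real^'s^'s \<Rightarrow> ('m::finite \<Rightarrow> real^'s^'t) \<Rightarrow> real \<Rightarrow> nat \<Rightarrow> nat
    \<Rightarrow> real^'s^'s \<Rightarrow> ('m \<Rightarrow> real^'t^'r) \<Rightarrow> ('m \<Rightarrow> bool) \<Rightarrow> real" where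
  "Qfun A W C \<gamma> K k = Qr A W C \<gamma> (K - k)"

text \<open>Delta-functions, indexed by n = K - 1 - k: Dr 0 = Delta_{K-1} = 0.\<close>
fun Dr :: "real^'s^'s \<Rightarrow> real^'s^'s \<Rightarrow> ('m::finite \<Rightarrow> real^'s^'t) \<Rightarrow> real \<Rightarrow> nat
    \<Rightarrow> real^'s^'s \<Rightarrow> ('m \<Rightarrow> real^'t^'r) \<Rightarrow> ('m \<Rightarrow> bool) \<Rightarrow> real" where
  "Dr A W C \<gamma> 0 S H p = 0"
| "Dr A W C \<gamma> (Suc n) S H p =
     (\<integral>H'. Min (range (\<lambda>p'. sched_cost \<gamma> C p'
                  + trace (fmap A C (fmap A C S p H + W) p' H')
                  + Dr A W C \<gamma> n (fmap A C S p H + W) H' p')) \<partial>gauss_chan)"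

text \<open>Delta_k for horizon K (meaningful for k <= K - 1).\<close>
definition Delta :: "real^'s^'s \<Rightarrow> real^'s^'s \<Rightarrow> ('m::finite \<Rightarrow> real^'s^'t) \<Rightarrow> real \<Rightarrow> nat \<Rightarrow> nat
    \<Rightarrow> real^'s^'s \<Rightarrow> ('m \<Rightarrow> real^'t^'r) \<Rightarrow> ('m \<Rightarrow> bool) \<Rightarrow> real" where
  "Delta A W C \<gamma> K k = Dr A W C \<gamma> (K - 1 - k)"

text \<open>Scheduling policies: pi_k = pol k Sigma_k H_k (Markov policies, as in Problem 1).
  Admissible = jointly measurable in (Sigma_k, H_k).\<close>
definition adm_policy ::
  "(nat \<Rightarrow> real^'s^'s \<Rightarrow> ('m::finite \<Rightarrow> real^'t^'r) \<Rightarrow> ('m \<Rightarrow> bool)) \<Rightarrow> bool" where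
  "adm_policy pol \<longleftrightarrow>
     (\<forall>k. (\<lambda>(S, H). pol k S H) \<in> measurable (borel \<Otimes>\<^sub>M chan_space) (count_space UNIV))"

fun traj :: "real^'s^'s \<Rightarrow> real^'s^'s \<Rightarrow> ('m::finite \<Rightarrow> real^'s^'t)
    \<Rightarrow> (nat \<Rightarrow> real^'s^'s \<Rightarrow> ('m \<Rightarrow> real^'t^'r) \<Rightarrow> ('m \<Rightarrow> bool))
    \<Rightarrow> real^'s^'s \<Rightarrow> (nat \<Rightarrow> 'm \<Rightarrow> real^'t^'r) \<Rightarrow> nat \<Rightarrow> real^'s^'s" where
  "traj A W C pol S0 Hs 0 = S0"
| "traj A W C pol S0 Hs (Suc k) =
     fmap A C (traj A W C pol S0 Hs k) (pol k (traj A W C pol S0 Hs k) (Hs k)) (Hs k) + W"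

definition total_cost :: "real^'s^'s \<Rightarrow> real^'s^'s \<Rightarrow> ('m::finite \<Rightarrow> real^'s^'t) \<Rightarrow> real \<Rightarrow> nat
    \<Rightarrow> (nat \<Rightarrow> real^'s^'s \<Rightarrow> ('m \<Rightarrow> real^'t^'r) \<Rightarrow> ('m \<Rightarrow> bool))
    \<Rightarrow> real^'s^'s \<Rightarrow> (nat \<Rightarrow> 'm \<Rightarrow> real^'t^'r) \<Rightarrow> real" where
  "total_cost A W C \<gamma> K pol S0 Hs =
     (\<Sum>k<K. trace (traj A W C pol S0 Hs k)
             + sched_cost \<gamma> C (pol k (traj A W C pol S0 Hs k) (Hs k)))
     + trace (traj A W C pol S0 Hs K)"

definition cost_J :: "real^'s^'s \<Rightarrow> real^'s^'s \<Rightarrow> ('m::finite \<Rightarrow> real^'s^'t) \<Rightarrow> real \<Rightarrow> nat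
    \<Rightarrow> (nat \<Rightarrow> real^'s^'s \<Rightarrow> ('m \<Rightarrow> real^'t^'r) \<Rightarrow> ('m \<Rightarrow> bool))
    \<Rightarrow> real^'s^'s \<Rightarrow> real" where
  "cost_J A W C \<gamma> K pol S0 =
     (\<integral>Hs. total_cost A W C \<gamma> K pol S0 Hs \<partial>(PiM {..<K} (\<lambda>_. gauss_chan)))"

end

theory Submission
  imports Defs
begin

text \<open>Backward induction. The Bellman operator \<open>B\<close> maps a terminal cost \<open>g\<close> to the
  average over a fresh channel \<open>H\<close> of the minimum over schedules \<open>\<pi>\<close> of
  \<open>tr \<Sigma> + scheduling cost + g (f(\<Sigma>,\<pi>,H) + W)\<close>. With \<open>V 0 = tr\<close> and
  \<open>V (n+1) = B (V n)\<close>, the function \<open>Q_k\<close> is this stage cost with terminal cost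
  \<open>V (K-k-1)\<close>. Integrating out the last channel of a trajectory turns the expected
  \<open>(N+1)\<close>-step cost with terminal cost \<open>g\<close> into the \<open>N\<close>-step cost whose terminal
  cost is the policy's one-step average of \<open>g\<close>; that average dominates \<open>B g\<close>, with
  equality for a \<open>Q\<close>-minimising policy, so iterating gives optimality and the value
  \<open>V K \<Sigma>_0\<close>. Unfolding the recursion once more splits off \<open>tr f(M_k) + (K-k) tr W\<close>
  and leaves \<open>\<Delta>_k\<close>; the threshold rule compares \<open>Q\<close> at \<open>\<delta>_m = 0\<close> and
  \<open>\<delta>_m = 1\<close>, whose scheduling costs differ by \<open>tr (\<gamma> C_m C_m^T)\<close>.
  All expectations are finite: \<open>(\<Sigma>^-1 + G)^-1 \<le> \<Sigma>\<close> gives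
  \<open>tr f(\<Sigma>,\<pi>,H) \<le> c tr \<Sigma>\<close> uniformly in the channel.\<close>

section \<open>Positive definite matrices and the Riccati map\<close>

definition psd_mat :: "real^'n^'n \<Rightarrow> bool" where
  "psd_mat S \<longleftrightarrow> transpose S = S \<and> (\<forall>x. 0 \<le> x \<bullet> (S *v x))"

lemma inner_matrix_vector_transpose: "x \<bullet> (M *v y) = (transpose M *v x) \<bullet> y"
  for M :: "real^'n^'m"
  by (metis dot_lmul_matrix vector_transpose_matrix inner_commute)

lemma inner_matrix_vector_sym: "transpose M = M \<Longrightarrow> x \<bullet> (M *v y) = y \<bullet> (M *v x)"
  for M :: "real^'n^'n"
  by (metis inner_matrix_vector_transpose inner_commute)

lemma matrix_inv_mult:
  fixes X :: "real^'n^'n"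
  assumes "invertible X"
  shows "X ** matrix_inv X = mat 1" "matrix_inv X ** X = mat 1"
proof -
  have "\<exists>X'. X ** X' = mat 1 \<and> X' ** X = mat 1"
    using assms unfolding invertible_def by blast
  from someI_ex[OF this] show "X ** matrix_inv X = mat 1" "matrix_inv X ** X = mat 1"
    unfolding matrix_inv_def by auto
qed

lemma matrix_vector_mul_matrix_inv: "invertible X \<Longrightarrow> X *v (matrix_inv X *v x) = x"
  for X :: "real^'n^'n"
  by (simp add: matrix_vector_mul_assoc matrix_inv_mult)

lemma transpose_matrix_inv_sym:
  fixes X :: "real^'n^'n"
  assumes X: "invertible X" and sym: "transpose X = X"
  shows "transpose (matrix_inv X) = matrix_inv X"
proof -
  have "transpose (matrix_inv X) ** X = mat 1"
    by (metis sym matrix_inv_mult(1)[OF X] matrix_transpose_mul transpose_mat)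
  then have "transpose (matrix_inv X) = transpose (matrix_inv X) ** X ** matrix_inv X"
    by (metis matrix_mul_assoc matrix_inv_mult(1)[OF X] matrix_mul_rid)
  also have "\<dots> = matrix_inv X"
    using \<open>transpose (matrix_inv X) ** X = mat 1\<close> by simp
  finally show ?thesis .
qed

lemma pd_mat_invertible: "pd_mat X \<Longrightarrow> invertible X"
  unfolding pd_mat_def
  by (metis inner_zero_right less_irrefl matrix_left_invertible_ker invertible_left_inverse)

lemma pd_mat_matrix_inv:
  fixes X :: "real^'n^'n"
  assumes X: "pd_mat X"
  shows "pd_mat (matrix_inv X)"
proof -
  have inv: "invertible X" using pd_mat_invertible[OF X] .
  have "0 < x \<bullet> (matrix_inv X *v x)" if "x \<noteq> 0" for x
  proof -
    define y where "y = matrix_inv X *v x"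
    have x: "x = X *v y" using matrix_vector_mul_matrix_inv[OF inv] y_def by simp
    then have "y \<noteq> 0" using that by auto
    then have "0 < y \<bullet> (X *v y)" using X pd_mat_def by blast
    then show ?thesis unfolding y_def[symmetric] by (subst (1) x) (simp add: inner_commute)
  qed
  then show ?thesis
    using X transpose_matrix_inv_sym[OF inv] unfolding pd_mat_def by blast
qed

lemma pd_imp_psd_mat: "pd_mat X \<Longrightarrow> psd_mat X"
  unfolding pd_mat_def psd_mat_def by (metis inner_zero_left order_refl less_imp_le)

lemma psd_mat_gram: "psd_mat (transpose E ** E)"
  for E :: "real^'n^'m"
proof -
  have "x \<bullet> ((transpose E ** E) *v x) = (E *v x) \<bullet> (E *v x)" for x
    by (metis inner_matrix_vector_transpose matrix_vector_mul_assoc transpose_transpose inner_commute)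
  then show ?thesis unfolding psd_mat_def by (simp add: matrix_transpose_mul)
qed

lemma pd_mat_add_psd: "pd_mat X \<Longrightarrow> psd_mat Y \<Longrightarrow> pd_mat (X + Y)"
  unfolding pd_mat_def psd_mat_def
  by (auto simp: transpose_def vec_eq_iff matrix_vector_mult_add_rdistrib inner_add_right
      add_pos_nonneg)

lemma psd_mat_congruence: "psd_mat P \<Longrightarrow> psd_mat (A ** P ** transpose A)"
  for A :: "real^'n^'m" and P :: "real^'n^'n"
proof -
  assume P: "psd_mat P"
  have "x \<bullet> ((A ** P ** transpose A) *v x) = (transpose A *v x) \<bullet> (P *v (transpose A *v x))" for x
    by (simp add: matrix_vector_mul_assoc[symmetric] inner_matrix_vector_transpose)
  moreover have "transpose (A ** P ** transpose A) = A ** P ** transpose A"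
    using P unfolding psd_mat_def by (simp add: matrix_transpose_mul matrix_mul_assoc)
  ultimately show ?thesis using P unfolding psd_mat_def by simp
qed

lemma quadratic_form_inv_add_le:
  fixes S G :: "real^'n^'n"
  assumes S: "pd_mat S" and G: "psd_mat G"
  shows "x \<bullet> (matrix_inv (matrix_inv S + G) *v x) \<le> x \<bullet> (S *v x)"
proof -
  define N where "N = matrix_inv S + G"
  have N: "invertible N"
    unfolding N_def by (intro pd_mat_invertible pd_mat_add_psd pd_mat_matrix_inv S G)
  have Sinv: "invertible S" using pd_mat_invertible[OF S] .
  define y where "y = matrix_inv N *v x"
  define u where "u = matrix_inv S *v y"
  have "x \<bullet> y = y \<bullet> (N *v y)"
    using matrix_vector_mul_matrix_inv[OF N] y_def by (simp add: inner_commute)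
  also have "\<dots> = u \<bullet> y + y \<bullet> (G *v y)"
    by (simp add: N_def u_def matrix_vector_mult_add_rdistrib inner_add_right inner_commute)
  finally have xy: "x \<bullet> y = u \<bullet> y + y \<bullet> (G *v y)" .
  have Su: "S *v u = y" using matrix_vector_mul_matrix_inv[OF Sinv] u_def by simp
  have "u \<bullet> (S *v x) = x \<bullet> (S *v u)"
    using S inner_matrix_vector_sym unfolding pd_mat_def by blast
  \<comment> \<open>completing the square: \<open>0 \<le> (x - u) S (x - u)\<close>\<close>
  then have "(x - u) \<bullet> (S *v (x - u)) = x \<bullet> (S *v x) - 2 * (x \<bullet> y) + u \<bullet> y"
    by (simp add: matrix_vector_mult_diff_distrib inner_diff_left inner_diff_right Su inner_commute)
  moreover have "0 \<le> (x - u) \<bullet> (S *v (x - u))"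
    using pd_imp_psd_mat[OF S] psd_mat_def by blast
  moreover have "0 \<le> y \<bullet> (G *v y)" using G psd_mat_def by blast
  ultimately show ?thesis using xy by (simp add: y_def N_def)
qed

lemma psd_mat_fmap: "pd_mat S \<Longrightarrow> psd_mat (fmap A C S p H)"
  unfolding fmap_def
  by (intro psd_mat_congruence pd_imp_psd_mat pd_mat_matrix_inv pd_mat_add_psd psd_mat_gram)

lemma pd_mat_fmap_add: "pd_mat S \<Longrightarrow> pd_mat W \<Longrightarrow> pd_mat (fmap A C S p H + W)"
  by (metis add.commute pd_mat_add_psd psd_mat_fmap)

lemma trace_congruence:
  "trace (A ** P ** transpose A) = (\<Sum>i\<in>UNIV. (A $ i) \<bullet> (P *v (A $ i)))"
  for A :: "real^'n^'m" and P :: "real^'n^'n"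
  unfolding trace_def
proof (rule sum.cong[OF refl])
  fix i
  have "(A ** P ** transpose A) $ i $ i = (\<Sum>k\<in>UNIV. \<Sum>l\<in>UNIV. A$i$l * P$l$k * A$i$k)"
    by (simp add: matrix_matrix_mult_def transpose_def sum_distrib_right)
  also have "\<dots> = (\<Sum>l\<in>UNIV. \<Sum>k\<in>UNIV. A$i$l * P$l$k * A$i$k)"
    by (rule sum.swap)
  also have "\<dots> = A $ i \<bullet> (P *v A $ i)"
    by (simp add: matrix_vector_mult_def inner_vec_def sum_distrib_left mult.assoc)
  finally show "(A ** P ** transpose A) $ i $ i = A $ i \<bullet> (P *v A $ i)" .
qed

lemma trace_fmap_le_congruence: "pd_mat S \<Longrightarrow> trace (fmap A C S p H) \<le> trace (A ** S ** transpose A)"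
  unfolding fmap_def trace_congruence
  by (intro sum_mono quadratic_form_inv_add_le psd_mat_gram)

lemma psd_mat_diag_nonneg: "psd_mat P \<Longrightarrow> 0 \<le> P $ i $ i"
  unfolding psd_mat_def
  by (metis inner_axis' cart_eq_inner_axis matrix_vector_mult_basis column_def vec_lambda_beta
      axis_nth inner_commute mult_1)

lemma psd_mat_trace_nonneg: "psd_mat P \<Longrightarrow> 0 \<le> trace P"
  unfolding trace_def by (intro sum_nonneg psd_mat_diag_nonneg)

lemma pd_mat_trace_nonneg: "pd_mat P \<Longrightarrow> 0 \<le> trace P"
  by (intro psd_mat_trace_nonneg pd_imp_psd_mat)

lemma psd_mat_entry_le_trace:
  fixes P :: "real^'n^'n"
  assumes P: "psd_mat P"
  shows "\<bar>P $ i $ j\<bar> \<le> trace P"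
proof (cases "i = j")
  case True
  have "P $ j $ j \<le> (\<Sum>k\<in>UNIV. P $ k $ k)"
    by (rule member_le_sum) (auto intro: psd_mat_diag_nonneg[OF P])
  then show ?thesis using True psd_mat_diag_nonneg[OF P, of j] by (simp add: trace_def)
next
  case False
  have sym: "P $ j $ i = P $ i $ j"
    using P unfolding psd_mat_def by (metis transpose_def vec_lambda_beta)
  have ax: "axis a 1 \<bullet> (P *v axis b 1) = P $ a $ b" for a b
    by (simp add: matrix_vector_mult_basis inner_axis' column_def)
  define v :: "real^'n" where "v = axis i 1 + axis j 1"
  define w :: "real^'n" where "w = axis i 1 - axis j 1"
  \<comment> \<open>\<open>2 \<bar>P\<^sub>i\<^sub>j\<bar> \<le> P\<^sub>i\<^sub>i + P\<^sub>j\<^sub>j\<close> from the quadratic form at \<open>e\<^sub>i \<plusminus> e\<^sub>j\<close>\<close>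
  have "v \<bullet> (P *v v) = P $ i $ i + P $ j $ j + 2 * P $ i $ j"
    unfolding v_def using sym
    by (simp add: matrix_vector_right_distrib inner_add_left inner_add_right ax)
  moreover have "w \<bullet> (P *v w) = P $ i $ i + P $ j $ j - 2 * P $ i $ j"
    unfolding w_def using sym
    by (simp add: matrix_vector_mult_diff_distrib inner_diff_left inner_diff_right ax)
  moreover have "0 \<le> v \<bullet> (P *v v)" "0 \<le> w \<bullet> (P *v w)" using P psd_mat_def by blast+
  moreover have "P $ i $ i + P $ j $ j \<le> trace P"
  proof -
    have "(\<Sum>k\<in>{i,j}. P $ k $ k) \<le> (\<Sum>k\<in>UNIV. P $ k $ k)"
      by (intro sum_mono2) (auto intro: psd_mat_diag_nonneg[OF P])
    then show ?thesis using False by (simp add: trace_def)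
  qed
  moreover have "0 \<le> P $ i $ i" "0 \<le> P $ j $ j" using psd_mat_diag_nonneg[OF P] by auto
  ultimately show ?thesis by linarith
qed

lemma psd_quadratic_form_le_trace:
  fixes P :: "real^'n^'n"
  assumes P: "psd_mat P"
  shows "x \<bullet> (P *v x) \<le> trace P * (\<Sum>k\<in>UNIV. \<bar>x $ k\<bar>)\<^sup>2"
proof -
  have "x \<bullet> (P *v x) = (\<Sum>k\<in>UNIV. \<Sum>l\<in>UNIV. x $ k * P $ k $ l * x $ l)"
    by (simp add: matrix_vector_mult_def inner_vec_def sum_distrib_left mult_ac)
  also have "\<dots> \<le> (\<Sum>k\<in>UNIV. \<Sum>l\<in>UNIV. \<bar>x $ k\<bar> * trace P * \<bar>x $ l\<bar>)"
  proof (intro sum_mono)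
    fix k l
    have "x $ k * P $ k $ l * x $ l \<le> \<bar>x $ k\<bar> * \<bar>P $ k $ l\<bar> * \<bar>x $ l\<bar>"
      by (metis abs_ge_self abs_mult)
    also have "\<dots> \<le> \<bar>x $ k\<bar> * trace P * \<bar>x $ l\<bar>"
      by (intro mult_right_mono mult_left_mono psd_mat_entry_le_trace P) auto
    finally show "x $ k * P $ k $ l * x $ l \<le> \<bar>x $ k\<bar> * trace P * \<bar>x $ l\<bar>" .
  qed
  also have "\<dots> = trace P * (\<Sum>k\<in>UNIV. \<bar>x $ k\<bar>)\<^sup>2"
    unfolding power2_eq_square sum_product sum_distrib_left
    by (intro sum.cong refl) (simp add: mult_ac sum_distrib_left)
  finally show ?thesis .
qed

lemma trace_congruence_le:
  fixes A :: "real^'n^'m"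
  obtains c where "0 \<le> c" "\<And>P. psd_mat P \<Longrightarrow> trace (A ** P ** transpose A) \<le> c * trace P"
proof
  define c where "c = (\<Sum>i\<in>UNIV. (\<Sum>k\<in>UNIV. \<bar>A $ i $ k\<bar>)\<^sup>2)"
  show "0 \<le> c" unfolding c_def by (intro sum_nonneg) auto
  fix P :: "real^'n^'n" assume "psd_mat P"
  then have "trace (A ** P ** transpose A) \<le> (\<Sum>i\<in>UNIV. trace P * (\<Sum>k\<in>UNIV. \<bar>A $ i $ k\<bar>)\<^sup>2)"
    unfolding trace_congruence by (intro sum_mono psd_quadratic_form_le_trace)
  then show "trace (A ** P ** transpose A) \<le> c * trace P"
    by (simp add: c_def sum_distrib_left mult_ac)
qed

lemma trace_fmap_le_trace:
  obtains c where "0 \<le> c" "\<And>S C p H. pd_mat S \<Longrightarrow> trace (fmap A C S p H) \<le> c * trace S"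
  by (metis trace_congruence_le trace_fmap_le_congruence pd_imp_psd_mat order_trans)

section \<open>Measurability\<close>

lemma borel_measurable_vec_lambda[measurable (raw)]:
  fixes f :: "'i::finite \<Rightarrow> 'a \<Rightarrow> 'b::euclidean_space"
  assumes "\<And>i. f i \<in> borel_measurable M"
  shows "(\<lambda>x. \<chi> i. f i x) \<in> borel_measurable M"
proof (subst borel_measurable_euclidean_space, intro ballI)
  fix b :: "'b^'i" assume "b \<in> Basis"
  then obtain i u where b: "b = axis i u" "u \<in> Basis" unfolding Basis_vec_def by auto
  have "(\<lambda>x. (\<chi> i. f i x) \<bullet> b) = (\<lambda>x. f i x \<bullet> u)" using b by (simp add: inner_axis)
  then show "(\<lambda>x. (\<chi> i. f i x) \<bullet> b) \<in> borel_measurable M"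
    using assms by simp
qed

lemma borel_measurable_vec_nth[measurable (raw)]:
  fixes f :: "'a \<Rightarrow> 'b::euclidean_space^'i::finite"
  assumes "f \<in> borel_measurable M"
  shows "(\<lambda>x. f x $ i) \<in> borel_measurable M"
proof (subst borel_measurable_euclidean_space, intro ballI)
  fix u :: 'b assume "u \<in> Basis"
  have "(\<lambda>x. f x $ i \<bullet> u) = (\<lambda>x. f x \<bullet> axis i u)" by (simp add: inner_axis)
  then show "(\<lambda>x. f x $ i \<bullet> u) \<in> borel_measurable M"
    using assms by simp
qed

lemma borel_measurable_matrix_mult[measurable (raw)]:
  fixes f :: "'a \<Rightarrow> real^'n^'m" and g :: "'a \<Rightarrow> real^'k^'n"
  assumes [measurable]: "f \<in> borel_measurable M" "g \<in> borel_measurable M"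
  shows "(\<lambda>x. f x ** g x) \<in> borel_measurable M"
  unfolding matrix_matrix_mult_def by measurable

lemma borel_measurable_transpose[measurable (raw)]:
  fixes f :: "'a \<Rightarrow> real^'n^'m"
  assumes [measurable]: "f \<in> borel_measurable M"
  shows "(\<lambda>x. transpose (f x)) \<in> borel_measurable M"
  unfolding transpose_def by measurable

lemma borel_measurable_det[measurable (raw)]:
  fixes f :: "'a \<Rightarrow> real^'n^'n"
  assumes [measurable]: "f \<in> borel_measurable M"
  shows "(\<lambda>x. det (f x)) \<in> borel_measurable M"
  unfolding det_def by measurable

lemma borel_measurable_trace[measurable (raw)]:
  fixes f :: "'a \<Rightarrow> real^'n^'n"
  assumes [measurable]: "f \<in> borel_measurable M"
  shows "(\<lambda>x. trace (f x)) \<in> borel_measurable M"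
  unfolding trace_def by measurable

text \<open>Cramer's rule; for singular \<open>X\<close>, \<open>matrix_inv X\<close> is the constant junk value
  \<open>SOME X'. False\<close>.\<close>

lemma matrix_inv_cramer:
  fixes X :: "real^'n^'n"
  shows "matrix_inv X = (if det X = 0 then (SOME X'. False)
     else (\<chi> i k. det (\<chi> a b. if b = i then mat 1 $ a $ k else X $ a $ b) / det X))"
proof (cases "det X = 0")
  case True
  then have "(\<lambda>X'. X ** X' = mat 1 \<and> X' ** X = mat 1) = (\<lambda>X'. False)"
    using invertible_det_nz unfolding invertible_def by blast
  then show ?thesis using True unfolding matrix_inv_def by simp
next
  case False
  then have inv: "invertible X" using invertible_det_nz by blast
  have "matrix_inv X $ i $ k = det (\<chi> a b. if b = i then mat 1 $ a $ k else X $ a $ b) / det X"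
    for i k
  proof -
    have "X *v (\<chi> i. matrix_inv X $ i $ k) = (\<chi> a. mat 1 $ a $ k)"
      using matrix_inv_mult(1)[OF inv]
      by (simp add: vec_eq_iff matrix_matrix_mult_def matrix_vector_mult_def)
    moreover have "(\<chi> a b. if b = i then (\<chi> a. mat 1 $ a $ k) $ a else X $ a $ b)
       = (\<chi> a b. if b = i then mat 1 $ a $ k else (X $ a $ b :: real))"
      by (simp add: vec_eq_iff)
    ultimately show ?thesis
      unfolding cramer[OF False] by (simp add: vec_eq_iff)
  qed
  then show ?thesis using False by (simp add: vec_eq_iff)
qed

lemma borel_measurable_matrix_inv[measurable (raw)]:
  fixes f :: "'a \<Rightarrow> real^'n^'n"
  assumes [measurable]: "f \<in> borel_measurable M"
  shows "(\<lambda>x. matrix_inv (f x)) \<in> borel_measurable M"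
  unfolding matrix_inv_cramer by measurable

lemma borel_measurable_eff_chan[measurable (raw)]:
  fixes h :: "'a \<Rightarrow> ('m::finite \<Rightarrow> real^'t^'r)"
  assumes "h \<in> measurable M chan_space"
  shows "(\<lambda>x. eff_chan C p (h x)) \<in> borel_measurable M"
proof -
  have [measurable]: "(\<lambda>x. h x m) \<in> borel_measurable M" for m
    using measurable_component_singleton[of m UNIV "\<lambda>_. borel"] assms
    unfolding chan_space_def by (simp add: measurable_compose[of h])
  show ?thesis unfolding eff_chan_def by measurable
qed

lemma borel_measurable_fmap[measurable (raw)]:
  fixes h :: "'a \<Rightarrow> ('m::finite \<Rightarrow> real^'t^'r)"
  assumes [measurable]: "h \<in> measurable M chan_space" "f \<in> borel_measurable M"
  shows "(\<lambda>x. fmap A C (f x) p (h x)) \<in> borel_measurable M"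
  unfolding fmap_def by measurable

lemma sched_cost_bounds:
  assumes "0 \<le> \<gamma>"
  shows "0 \<le> sched_cost \<gamma> C p" "sched_cost \<gamma> C p \<le> sched_cost \<gamma> C (\<lambda>_. True)"
proof -
  have eq: "sched_cost \<gamma> C q = (\<Sum>m\<in>UNIV. \<gamma> * (of_bool (q m) * trace (C m ** transpose (C m))))"
    for q
    unfolding sched_cost_def by (simp add: trace_def sum_distrib_left)
  have "0 \<le> trace (C m ** transpose (C m))" for m
    using psd_mat_trace_nonneg[OF psd_mat_gram[of "transpose (C m)"]] by simp
  then show "0 \<le> sched_cost \<gamma> C p" "sched_cost \<gamma> C p \<le> sched_cost \<gamma> C (\<lambda>_. True)"
    unfolding eq using assms by (auto intro!: sum_nonneg sum_mono mult_left_mono)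
qed

lemma sched_cost_fun_upd_True:
  "sched_cost \<gamma> C (p(m := True))
     = sched_cost \<gamma> C (p(m := False)) + trace (\<gamma> *\<^sub>R (C m ** transpose (C m)))"
proof -
  have split: "sched_cost \<gamma> C q = \<gamma> * trace (of_bool (q m) *\<^sub>R (C m ** transpose (C m)))
     + (\<Sum>m'\<in>UNIV - {m}. \<gamma> * trace (of_bool (q m') *\<^sub>R (C m' ** transpose (C m'))))" for q
    unfolding sched_cost_def by (rule sum.remove) auto
  have "(\<Sum>m'\<in>UNIV - {m}. \<gamma> * trace (of_bool ((p(m := b)) m') *\<^sub>R (C m' ** transpose (C m'))))
     = (\<Sum>m'\<in>UNIV - {m}. \<gamma> * trace (of_bool (p m') *\<^sub>R (C m' ** transpose (C m'))))" for b
    by (intro sum.cong) auto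
  then show ?thesis unfolding split[of "p(m := _)"] by (simp add: trace_def sum_distrib_left)
qed

lemma minimizer_fun_upd_True:
  fixes Q :: "('m \<Rightarrow> bool) \<Rightarrow> 'a::linorder"
  assumes opt: "\<forall>p'. Q p \<le> Q p'"
  shows "p m \<Longrightarrow> Q (p(m := True)) \<le> Q (p(m := False))"
    and "Q (p(m := True)) \<le> Q (p(m := False)) \<Longrightarrow> Q (p(m := True)) \<le> Q p'"
proof -
  show "p m \<Longrightarrow> Q (p(m := True)) \<le> Q (p(m := False))"
    using opt by (metis (full_types) fun_upd_triv)
  show "Q (p(m := True)) \<le> Q p'" if "Q (p(m := True)) \<le> Q (p(m := False))"
    using opt that by (cases "p m") (metis (full_types) fun_upd_triv order_trans)+
qed

section \<open>Dynamic programming for a general channel law\<close>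

text \<open>Affine growth in the trace keeps every expected cost finite, since trajectories have
  trace bounded uniformly in the channels.\<close>

definition trace_dominated :: "(real^'s^'s \<Rightarrow> real) \<Rightarrow> bool" where
  "trace_dominated g \<longleftrightarrow> g \<in> borel_measurable borel \<and>
     (\<exists>a b. 0 \<le> b \<and> (\<forall>S. pd_mat S \<longrightarrow> 0 \<le> g S \<and> g S \<le> a + b * trace S))"

lemma trace_dominated_trace: "trace_dominated trace"
  unfolding trace_dominated_def
  by (auto intro!: exI[of _ 0] exI[of _ 1] pd_mat_trace_nonneg)

locale sched_dp = prob_space \<mu>
  for \<mu> :: "('m::finite \<Rightarrow> real^'t^'r) measure" +
  fixes A W :: "real^'s^'s" and C :: "'m \<Rightarrow> real^'s^'t" and \<gamma> :: real
  assumes sets_\<mu>: "sets \<mu> = sets chan_space"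
    and gamma_nonneg: "0 \<le> \<gamma>"
    and W_pd: "pd_mat W"
begin

lemma measurable_\<mu>_eq: "measurable N \<mu> = measurable N chan_space"
  by (rule measurable_cong_sets[OF refl sets_\<mu>])

lemma measurable_snd_chan_space[measurable]: "snd \<in> measurable (N \<Otimes>\<^sub>M \<mu>) chan_space"
  using measurable_snd measurable_\<mu>_eq by blast

lemma measurable_adm_policy:
  assumes "adm_policy pol"
  shows "(\<lambda>x. pol k (fst x) (snd x)) \<in> measurable (borel \<Otimes>\<^sub>M \<mu>) (count_space UNIV)"
proof -
  have eq: "measurable (borel \<Otimes>\<^sub>M \<mu>) (count_space UNIV)
      = measurable (borel \<Otimes>\<^sub>M chan_space) (count_space (UNIV :: ('m \<Rightarrow> bool) set))"
    by (rule measurable_cong_sets[OF sets_pair_measure_cong[OF refl sets_\<mu>] refl])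
  from assms show ?thesis unfolding adm_policy_def eq by (simp add: case_prod_beta')
qed

lemma integral_const_add:
  fixes f :: "_ \<Rightarrow> real"
  assumes "integrable \<mu> (\<lambda>x. c + f x)"
  shows "(\<integral>x. c + f x \<partial>\<mu>) = c + (\<integral>x. f x \<partial>\<mu>)"
proof -
  have "integrable \<mu> f" using Bochner_Integration.integrable_diff[OF assms integrable_const[of c]] by simp
  then show ?thesis by (simp add: prob_space)
qed

lemma trace_dominated_integral:
  fixes F :: "real^'s^'s \<Rightarrow> ('m \<Rightarrow> real^'t^'r) \<Rightarrow> real"
  assumes F[measurable]: "case_prod F \<in> borel_measurable (borel \<Otimes>\<^sub>M \<mu>)"
    and b: "0 \<le> b" and bound: "\<And>S H. pd_mat S \<Longrightarrow> 0 \<le> F S H \<and> F S H \<le> a + b * trace S"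
  shows "trace_dominated (\<lambda>S. \<integral>H. F S H \<partial>\<mu>)"
    and "pd_mat S \<Longrightarrow> integrable \<mu> (F S)"
proof -
  have int: "integrable \<mu> (F S)" if S: "pd_mat S" for S
  proof (rule integrable_const_bound[where B="a + b * trace S"])
    have "(\<lambda>H. case_prod F (S, H)) \<in> borel_measurable \<mu>" by measurable
    then show "F S \<in> borel_measurable \<mu>" by simp
  qed (use bound[OF S] in auto)
  then show "pd_mat S \<Longrightarrow> integrable \<mu> (F S)" .
  have "0 \<le> (\<integral>H. F S H \<partial>\<mu>) \<and> (\<integral>H. F S H \<partial>\<mu>) \<le> a + b * trace S" if S: "pd_mat S" for S
  proof
    show "0 \<le> (\<integral>H. F S H \<partial>\<mu>)" using bound[OF S] by (intro Bochner_Integration.integral_nonneg) auto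
    have "(\<integral>H. F S H \<partial>\<mu>) \<le> (\<integral>H. a + b * trace S \<partial>\<mu>)"
      using bound[OF S] int[OF S] by (intro integral_mono) auto
    then show "(\<integral>H. F S H \<partial>\<mu>) \<le> a + b * trace S" by (simp add: prob_space)
  qed
  with b borel_measurable_lebesgue_integral[OF F]
  show "trace_dominated (\<lambda>S. \<integral>H. F S H \<partial>\<mu>)" unfolding trace_dominated_def by blast
qed

definition stage_cost :: "(real^'s^'s \<Rightarrow> real) \<Rightarrow> real^'s^'s \<Rightarrow> ('m \<Rightarrow> real^'t^'r)
    \<Rightarrow> ('m \<Rightarrow> bool) \<Rightarrow> real" where
  "stage_cost g S H p = trace S + sched_cost \<gamma> C p + g (fmap A C S p H + W)"

definition bellman :: "(real^'s^'s \<Rightarrow> real) \<Rightarrow> real^'s^'s \<Rightarrow> real" where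
  "bellman g S = (\<integral>H. Min (range (stage_cost g S H)) \<partial>\<mu>)"

definition policy_bellman :: "(nat \<Rightarrow> real^'s^'s \<Rightarrow> ('m \<Rightarrow> real^'t^'r) \<Rightarrow> ('m \<Rightarrow> bool))
    \<Rightarrow> nat \<Rightarrow> (real^'s^'s \<Rightarrow> real) \<Rightarrow> real^'s^'s \<Rightarrow> real" where
  "policy_bellman pol k g S = (\<integral>H. stage_cost g S H (pol k S H) \<partial>\<mu>)"

lemma stage_cost_bounded:
  assumes "trace_dominated g"
  shows "\<exists>a b. 0 \<le> b \<and>
    (\<forall>S H p. pd_mat S \<longrightarrow> 0 \<le> stage_cost g S H p \<and> stage_cost g S H p \<le> a + b * trace S)"
proof -
  obtain a b where b: "0 \<le> b" and g: "\<And>S. pd_mat S \<Longrightarrow> 0 \<le> g S \<and> g S \<le> a + b * trace S"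
    using assms unfolding trace_dominated_def by blast
  obtain c where c: "0 \<le> c"
    "\<And>S p (H :: 'm \<Rightarrow> real^'t^'r). pd_mat S \<Longrightarrow> trace (fmap A C S p H) \<le> c * trace S"
    using trace_fmap_le_trace[where A=A] by metis
  define a' where "a' = sched_cost \<gamma> C (\<lambda>_. True) + a + b * trace W"
  have "0 \<le> stage_cost g S H p \<and> stage_cost g S H p \<le> a' + (1 + b * c) * trace S"
    if S: "pd_mat S" for S H p
  proof -
    have "0 \<le> g (fmap A C S p H + W)" "g (fmap A C S p H + W) \<le> a + b * trace (fmap A C S p H + W)"
      using g[OF pd_mat_fmap_add[OF S W_pd]] by auto
    moreover have "b * trace (fmap A C S p H + W) \<le> b * (c * trace S + trace W)"
      unfolding trace_add using c(2)[OF S] b by (intro mult_left_mono) auto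
    ultimately show ?thesis
      using pd_mat_trace_nonneg[OF S] sched_cost_bounds[OF gamma_nonneg, of C p]
      unfolding stage_cost_def a'_def by (simp add: algebra_simps)
  qed
  moreover have "0 \<le> 1 + b * c" using b c(1) by simp
  ultimately show ?thesis by blast
qed

lemma trace_dominated_bellman:
  assumes g: "trace_dominated g"
  shows "trace_dominated (bellman g)"
    and "pd_mat S \<Longrightarrow> integrable \<mu> (\<lambda>H. Min (range (stage_cost g S H)))"
proof -
  have [measurable]: "g \<in> borel_measurable borel" using g trace_dominated_def by blast
  obtain a b where b: "0 \<le> b" and bound:
    "\<And>S H p. pd_mat S \<Longrightarrow> 0 \<le> stage_cost g S H p \<and> stage_cost g S H p \<le> a + b * trace S"
    using stage_cost_bounded[OF g] by blast
  have meas: "(\<lambda>(S, H). Min (range (stage_cost g S H))) \<in> borel_measurable (borel \<Otimes>\<^sub>M \<mu>)"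
    unfolding case_prod_beta' stage_cost_def by measurable
  have "0 \<le> Min (range (stage_cost g S H)) \<and> Min (range (stage_cost g S H)) \<le> a + b * trace S"
    if "pd_mat S" for S H
  proof
    show "0 \<le> Min (range (stage_cost g S H))"
      using bound[OF that] by (intro Min.boundedI) auto
    have "Min (range (stage_cost g S H)) \<le> stage_cost g S H (\<lambda>_. True)"
      by (rule Min_le) auto
    then show "Min (range (stage_cost g S H)) \<le> a + b * trace S"
      using bound[OF that] by (meson order_trans)
  qed
  note dominated = trace_dominated_integral[OF meas b this]
  have "bellman g = (\<lambda>S. \<integral>H. Min (range (stage_cost g S H)) \<partial>\<mu>)"
    by (simp add: fun_eq_iff bellman_def)
  with dominated show "trace_dominated (bellman g)"
    and "pd_mat S \<Longrightarrow> integrable \<mu> (\<lambda>H. Min (range (stage_cost g S H)))"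
    by simp_all
qed

lemma trace_dominated_policy_bellman:
  assumes pol: "adm_policy pol" and g: "trace_dominated g"
  shows "trace_dominated (policy_bellman pol k g)"
    and "pd_mat S \<Longrightarrow> integrable \<mu> (\<lambda>H. stage_cost g S H (pol k S H))"
proof -
  have [measurable]: "g \<in> borel_measurable borel" using g trace_dominated_def by blast
  obtain a b where b: "0 \<le> b" and bound:
    "\<And>S H p. pd_mat S \<Longrightarrow> 0 \<le> stage_cost g S H p \<and> stage_cost g S H p \<le> a + b * trace S"
    using stage_cost_bounded[OF g] by blast
  have "(\<lambda>x. (\<lambda>q x. stage_cost g (fst x) (snd x) q) (pol k (fst x) (snd x)) x)
      \<in> borel_measurable (borel \<Otimes>\<^sub>M \<mu>)"
    by (rule measurable_compose_countable'[OF _ measurable_adm_policy[OF pol]])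
      (unfold stage_cost_def, measurable)
  then have meas: "(\<lambda>(S, H). stage_cost g S H (pol k S H)) \<in> borel_measurable (borel \<Otimes>\<^sub>M \<mu>)"
    by (simp add: case_prod_beta')
  note dominated = trace_dominated_integral[OF meas b bound]
  have "policy_bellman pol k g = (\<lambda>S. \<integral>H. stage_cost g S H (pol k S H) \<partial>\<mu>)"
    by (simp add: fun_eq_iff policy_bellman_def)
  with dominated show "trace_dominated (policy_bellman pol k g)"
    and "pd_mat S \<Longrightarrow> integrable \<mu> (\<lambda>H. stage_cost g S H (pol k S H))"
    by simp_all
qed

lemma bellman_le_policy_bellman:
  assumes "adm_policy pol" "trace_dominated g" "pd_mat S"
  shows "bellman g S \<le> policy_bellman pol k g S"
  unfolding bellman_def policy_bellman_def
  by (intro integral_mono trace_dominated_bellman(2) trace_dominated_policy_bellman(2) assms Min_le)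
    auto

lemma policy_bellman_eq_bellman:
  assumes "\<And>H p. stage_cost g S H (pol k S H) \<le> stage_cost g S H p"
  shows "policy_bellman pol k g S = bellman g S"
  unfolding bellman_def policy_bellman_def
  by (intro Bochner_Integration.integral_cong refl Min_eqI[symmetric]) (use assms in auto)

abbreviation chan_seq :: "nat \<Rightarrow> (nat \<Rightarrow> 'm \<Rightarrow> real^'t^'r) measure" where
  "chan_seq N \<equiv> PiM {..<N} (\<lambda>_. \<mu>)"

lemma pd_mat_traj: "pd_mat S0 \<Longrightarrow> pd_mat (traj A W C pol S0 Hs k)"
  by (induction k) (auto intro: pd_mat_fmap_add W_pd)

lemma traj_cong: "(\<And>i. i < k \<Longrightarrow> Hs i = Hs' i) \<Longrightarrow> traj A W C pol S0 Hs k = traj A W C pol S0 Hs' k"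
  by (induction k) auto

lemma trace_traj_bounded:
  "pd_mat S0 \<Longrightarrow> \<exists>B. \<forall>Hs :: nat \<Rightarrow> 'm \<Rightarrow> real^'t^'r. trace (traj A W C pol S0 Hs k) \<le> B"
proof (induction k)
  case (Suc k)
  obtain c where c: "0 \<le> c"
    "\<And>S p (H :: 'm \<Rightarrow> real^'t^'r). pd_mat S \<Longrightarrow> trace (fmap A C S p H) \<le> c * trace S"
    using trace_fmap_le_trace[where A=A] by metis
  obtain B where B: "\<And>Hs. trace (traj A W C pol S0 Hs k) \<le> B" using Suc by blast
  have "trace (fmap A C (traj A W C pol S0 Hs k) p H) \<le> c * B"
    for Hs p and H :: "'m \<Rightarrow> real^'t^'r"
    using order_trans[OF c(2)[OF pd_mat_traj[OF Suc.prems]] mult_left_mono[OF B c(1)]] .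
  then have "trace (traj A W C pol S0 Hs (Suc k)) \<le> c * B + trace W" for Hs
    by (simp add: trace_add)
  then show ?case by blast
qed auto

lemma measurable_policy_step:
  assumes pol: "adm_policy pol" and k: "k < N" and f: "f \<in> borel_measurable (chan_seq N)"
  shows "(\<lambda>Hs. pol k (f Hs) (Hs k)) \<in> measurable (chan_seq N) (count_space UNIV)"
proof -
  have "(\<lambda>Hs. (f Hs, Hs k)) \<in> measurable (chan_seq N) (borel \<Otimes>\<^sub>M \<mu>)"
    using f k by (intro measurable_Pair) (simp_all add: measurable_component_singleton)
  from measurable_compose[OF this measurable_adm_policy[OF pol]] show ?thesis by simp
qed

lemma measurable_traj:
  assumes pol: "adm_policy pol"
  shows "k \<le> N \<Longrightarrow> (\<lambda>Hs. traj A W C pol S0 Hs k) \<in> borel_measurable (chan_seq N)"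
proof (induction k)
  case (Suc k)
  then have k: "k < N" by simp
  have [measurable]: "(\<lambda>Hs. traj A W C pol S0 Hs k) \<in> borel_measurable (chan_seq N)"
    using Suc by simp
  have [measurable]: "(\<lambda>Hs. Hs k) \<in> measurable (chan_seq N) chan_space"
    using k by (simp add: measurable_component_singleton flip: measurable_\<mu>_eq)
  have "(\<lambda>Hs. (\<lambda>q Hs. fmap A C (traj A W C pol S0 Hs k) q (Hs k) + W)
      (pol k (traj A W C pol S0 Hs k) (Hs k)) Hs) \<in> borel_measurable (chan_seq N)"
    by (rule measurable_compose_countable'[OF _ measurable_policy_step[OF pol k]]) auto
  then show ?case by simp
qed simp

definition path_cost :: "(nat \<Rightarrow> real^'s^'s \<Rightarrow> ('m \<Rightarrow> real^'t^'r) \<Rightarrow> ('m \<Rightarrow> bool))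
    \<Rightarrow> real^'s^'s \<Rightarrow> nat \<Rightarrow> (real^'s^'s \<Rightarrow> real) \<Rightarrow> (nat \<Rightarrow> 'm \<Rightarrow> real^'t^'r) \<Rightarrow> real" where
  "path_cost pol S0 N g Hs =
     (\<Sum>k<N. trace (traj A W C pol S0 Hs k) + sched_cost \<gamma> C (pol k (traj A W C pol S0 Hs k) (Hs k)))
     + g (traj A W C pol S0 Hs N)"

definition expected_cost :: "(nat \<Rightarrow> real^'s^'s \<Rightarrow> ('m \<Rightarrow> real^'t^'r) \<Rightarrow> ('m \<Rightarrow> bool))
    \<Rightarrow> real^'s^'s \<Rightarrow> nat \<Rightarrow> (real^'s^'s \<Rightarrow> real) \<Rightarrow> real" where
  "expected_cost pol S0 N g = (\<integral>Hs. path_cost pol S0 N g Hs \<partial>chan_seq N)"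

lemma measurable_path_cost:
  assumes pol: "adm_policy pol" and g[measurable]: "g \<in> borel_measurable borel"
  shows "path_cost pol S0 N g \<in> borel_measurable (chan_seq N)"
proof -
  have [measurable]: "(\<lambda>Hs. traj A W C pol S0 Hs k) \<in> borel_measurable (chan_seq N)" if "k \<le> N" for k
    using measurable_traj[OF pol that] .
  have "(\<lambda>Hs. (\<lambda>q Hs. sched_cost \<gamma> C q) (pol k (traj A W C pol S0 Hs k) (Hs k)) Hs)
      \<in> borel_measurable (chan_seq N)" if "k < N" for k
    by (rule measurable_compose_countable'[OF _ measurable_policy_step[OF pol that]])
      (use that in auto)
  then show ?thesis
    unfolding path_cost_def by (intro borel_measurable_add borel_measurable_sum) auto
qed

lemma path_cost_bounded:
  assumes S0: "pd_mat S0" and g: "trace_dominated g"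
  shows "\<exists>B. \<forall>Hs. \<bar>path_cost pol S0 N g Hs\<bar> \<le> B"
proof -
  obtain a b where b: "0 \<le> b" and g_bound: "\<And>S. pd_mat S \<Longrightarrow> 0 \<le> g S \<and> g S \<le> a + b * trace S"
    using g unfolding trace_dominated_def by blast
  have "\<forall>k. \<exists>B. \<forall>Hs. trace (traj A W C pol S0 Hs k) \<le> B"
    using trace_traj_bounded[OF S0] by blast
  then obtain B where B: "\<And>k Hs. trace (traj A W C pol S0 Hs k) \<le> B k"
    by metis
  let ?T = "traj A W C pol S0"
  have "\<bar>path_cost pol S0 N g Hs\<bar> \<le> (\<Sum>k<N. B k + sched_cost \<gamma> C (\<lambda>_. True)) + a + b * B N" for Hs
  proof -
    have "0 \<le> trace (?T Hs k)" for k using pd_mat_trace_nonneg[OF pd_mat_traj[OF S0]] .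
    then have "0 \<le> (\<Sum>k<N. trace (?T Hs k) + sched_cost \<gamma> C (pol k (?T Hs k) (Hs k)))"
      using sched_cost_bounds[OF gamma_nonneg] by (intro sum_nonneg add_nonneg_nonneg)
    moreover have "(\<Sum>k<N. trace (?T Hs k) + sched_cost \<gamma> C (pol k (?T Hs k) (Hs k)))
        \<le> (\<Sum>k<N. B k + sched_cost \<gamma> C (\<lambda>_. True))"
      using B sched_cost_bounds[OF gamma_nonneg] by (intro sum_mono add_mono)
    moreover have "0 \<le> g (?T Hs N)" "g (?T Hs N) \<le> a + b * trace (?T Hs N)"
      using g_bound pd_mat_traj[OF S0] by auto
    moreover have "b * trace (?T Hs N) \<le> b * B N" using B b by (intro mult_left_mono)
    ultimately show ?thesis unfolding path_cost_def by simp
  qed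
  then show ?thesis by blast
qed

lemma integrable_path_cost:
  assumes "adm_policy pol" "pd_mat S0" "trace_dominated g"
  shows "integrable (chan_seq N) (path_cost pol S0 N g)"
proof -
  interpret product: prob_space "chan_seq N" by (intro prob_space_PiM prob_space_axioms)
  obtain B where "\<And>Hs. \<bar>path_cost pol S0 N g Hs\<bar> \<le> B"
    using path_cost_bounded[OF assms(2,3)] by blast
  moreover have "path_cost pol S0 N g \<in> borel_measurable (chan_seq N)"
    using assms(1,3) measurable_path_cost trace_dominated_def by blast
  ultimately show ?thesis by (intro product.integrable_const_bound[where B=B]) auto
qed

lemma expected_cost_0: "expected_cost pol S0 0 g = g S0"
proof -
  interpret product: prob_space "chan_seq 0" by (intro prob_space_PiM prob_space_axioms)
  show ?thesis using product.prob_space unfolding expected_cost_def path_cost_def by simp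
qed

text \<open>The trajectory up to time \<open>N\<close> does not depend on \<open>H\<^sub>N\<close>, so integrating out the
  last channel only affects the final stage.\<close>

lemma expected_cost_Suc:
  assumes pol: "adm_policy pol" and S0: "pd_mat S0" and g: "trace_dominated g"
  shows "expected_cost pol S0 (Suc N) g = expected_cost pol S0 N (policy_bellman pol N g)"
proof -
  interpret product_sigma_finite "\<lambda>_::nat. \<mu>"
    unfolding product_sigma_finite_def using sigma_finite_measure by simp
  let ?T = "traj A W C pol S0"
  have int: "integrable (PiM (insert N {..<N}) (\<lambda>_. \<mu>)) (path_cost pol S0 (Suc N) g)"
    using integrable_path_cost[OF pol S0 g, of "Suc N"] by (simp add: lessThan_Suc)
  have "expected_cost pol S0 (Suc N) g
      = (\<integral>Hs. (\<integral>H. path_cost pol S0 (Suc N) g (Hs(N := H)) \<partial>\<mu>) \<partial>chan_seq N)"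
    unfolding expected_cost_def lessThan_Suc by (rule product_integral_insert[OF _ _ int]) auto
  also have "\<dots> = (\<integral>Hs. path_cost pol S0 N (policy_bellman pol N g) Hs \<partial>chan_seq N)"
  proof (rule Bochner_Integration.integral_cong[OF refl])
    fix Hs :: "nat \<Rightarrow> 'm \<Rightarrow> real^'t^'r"
    define P where "P = (\<Sum>k<N. trace (?T Hs k) + sched_cost \<gamma> C (pol k (?T Hs k) (Hs k)))"
    have T: "?T (Hs(N := H)) k = ?T Hs k" if "k \<le> N" for k H
      by (rule traj_cong) (use that in auto)
    have "path_cost pol S0 (Suc N) g (Hs(N := H)) = P + stage_cost g (?T Hs N) H (pol N (?T Hs N) H)"
      for H
      unfolding path_cost_def stage_cost_def P_def by (simp add: T)
    then have "(\<integral>H. path_cost pol S0 (Suc N) g (Hs(N := H)) \<partial>\<mu>)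
        = P + policy_bellman pol N g (?T Hs N)"
      unfolding policy_bellman_def
      by (simp add: integral_const_add trace_dominated_policy_bellman(2)[OF pol g pd_mat_traj[OF S0]]
          prob_space)
    also have "\<dots> = path_cost pol S0 N (policy_bellman pol N g) Hs"
      unfolding path_cost_def P_def ..
    finally show "(\<integral>H. path_cost pol S0 (Suc N) g (Hs(N := H)) \<partial>\<mu>)
        = path_cost pol S0 N (policy_bellman pol N g) Hs" .
  qed
  finally show ?thesis unfolding expected_cost_def .
qed

lemma expected_cost_mono:
  assumes "adm_policy pol" "pd_mat S0" "trace_dominated g1" "trace_dominated g2"
    and "\<And>S. pd_mat S \<Longrightarrow> g1 S \<le> g2 S"
  shows "expected_cost pol S0 N g1 \<le> expected_cost pol S0 N g2"
  unfolding expected_cost_def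
  by (intro integral_mono integrable_path_cost assms) (simp add: path_cost_def assms pd_mat_traj)

lemma expected_cost_cong:
  assumes "pd_mat S0" "\<And>S. pd_mat S \<Longrightarrow> g1 S = g2 S"
  shows "expected_cost pol S0 N g1 = expected_cost pol S0 N g2"
  unfolding expected_cost_def
  by (intro Bochner_Integration.integral_cong refl) (simp add: path_cost_def assms pd_mat_traj)

lemma trace_dominated_iterate:
  assumes "\<And>j. V (Suc j) = bellman (V j)" "trace_dominated (V 0)"
  shows "trace_dominated (V j)"
  by (induction j) (simp_all add: assms trace_dominated_bellman(1))

lemma value_le_expected_cost:
  assumes V_Suc: "\<And>j. V (Suc j) = bellman (V j)" and V0: "trace_dominated (V 0)"
    and pol: "adm_policy pol" and S0: "pd_mat S0"
  shows "V (N + j) S0 \<le> expected_cost pol S0 N (V j)"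
proof (induction N arbitrary: j)
  case 0
  then show ?case by (simp add: expected_cost_0)
next
  case (Suc N)
  have dom: "trace_dominated (V i)" for i using trace_dominated_iterate[OF V_Suc V0] .
  have "V (Suc N + j) S0 = V (N + Suc j) S0" by simp
  also have "\<dots> \<le> expected_cost pol S0 N (V (Suc j))" by (rule Suc.IH)
  also have "\<dots> \<le> expected_cost pol S0 N (policy_bellman pol N (V j))"
    unfolding V_Suc
    by (intro expected_cost_mono pol S0 trace_dominated_bellman(1) trace_dominated_policy_bellman(1)
        bellman_le_policy_bellman dom)
  also have "\<dots> = expected_cost pol S0 (Suc N) (V j)"
    by (rule expected_cost_Suc[symmetric, OF pol S0 dom])
  finally show ?case .
qed

lemma expected_cost_eq_value:
  assumes V_Suc: "\<And>j. V (Suc j) = bellman (V j)" and V0: "trace_dominated (V 0)"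
    and pol: "adm_policy pol" and S0: "pd_mat S0"
    and opt: "\<And>k S H p. k < N \<Longrightarrow> pd_mat S \<Longrightarrow>
      stage_cost (V (N + j - Suc k)) S H (pol k S H) \<le> stage_cost (V (N + j - Suc k)) S H p"
  shows "expected_cost pol S0 N (V j) = V (N + j) S0"
  using opt
proof (induction N arbitrary: j)
  case 0
  then show ?case by (simp add: expected_cost_0)
next
  case (Suc N)
  have dom: "trace_dominated (V i)" for i using trace_dominated_iterate[OF V_Suc V0] .
  have "expected_cost pol S0 (Suc N) (V j) = expected_cost pol S0 N (policy_bellman pol N (V j))"
    by (rule expected_cost_Suc[OF pol S0 dom])
  also have "\<dots> = expected_cost pol S0 N (V (Suc j))"
    unfolding V_Suc
    by (intro expected_cost_cong S0 policy_bellman_eq_bellman) (use Suc.prems[of N] in simp)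
  also have "\<dots> = V (N + Suc j) S0"
  proof (rule Suc.IH)
    fix k and S :: "real^'s^'s" and H p
    assume "k < N" "pd_mat S"
    then show "stage_cost (V (N + Suc j - Suc k)) S H (pol k S H)
        \<le> stage_cost (V (N + Suc j - Suc k)) S H p"
      using Suc.prems[of k S H p] by simp
  qed
  finally show ?case by simp
qed

end

section \<open>Q-functions under Gaussian channels\<close>

lemma sets_gauss_chan: "sets (gauss_chan :: ('m::finite \<Rightarrow> real^'t^'r) measure) = sets chan_space"
  unfolding gauss_chan_def by simp

lemma prob_space_gauss_chan: "prob_space (gauss_chan :: ('m::finite \<Rightarrow> real^'t^'r) measure)"
proof -
  let ?P = "PiM (UNIV :: ('m \<times> 'r \<times> 't) set) (\<lambda>_. density lborel std_normal_density)"
  have "prob_space ?P"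
    by (intro prob_space_PiM) (simp add: prob_space_normal_density)
  moreover have "(\<lambda>g m. \<chi> i j. g (m, i, j)) \<in> measurable ?P (chan_space :: ('m \<Rightarrow> real^'t^'r) measure)"
    unfolding chan_space_def by (rule measurable_PiM_single') auto
  ultimately show ?thesis unfolding gauss_chan_def by (rule prob_space.prob_space_distr)
qed

locale gauss_sched_dp = sched_dp \<mu> A W C \<gamma>
  for \<mu> :: "('m::finite \<Rightarrow> real^'t^'r) measure" and A W :: "real^'s^'s" and C \<gamma> +
  assumes \<mu>_gauss: "\<mu> = gauss_chan"
begin

text \<open>\<open>opt_value n\<close> is the paper's \<open>E[min\<^sub>\<pi> Q_(K-n)]\<close>, the optimal expected cost
  with \<open>n\<close> stages to go.\<close>

definition opt_value :: "nat \<Rightarrow> real^'s^'s \<Rightarrow> real" where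
  "opt_value n S = (\<integral>H. Min (range (Qr A W C \<gamma> n S H)) \<partial>\<mu>)"

lemma Qr_Suc_eq_stage_cost: "Qr A W C \<gamma> (Suc n) S H = stage_cost (opt_value n) S H"
  by (simp add: fun_eq_iff stage_cost_def opt_value_def flip: \<mu>_gauss)

lemma opt_value_0: "opt_value 0 = trace"
  by (simp add: fun_eq_iff opt_value_def prob_space)

lemma opt_value_Suc: "opt_value (Suc n) = bellman (opt_value n)"
  by (simp add: fun_eq_iff opt_value_def bellman_def Qr_Suc_eq_stage_cost)

lemma trace_dominated_opt_value: "trace_dominated (opt_value n)"
  by (rule trace_dominated_iterate[where V=opt_value])
    (simp_all add: opt_value_Suc opt_value_0 trace_dominated_trace)

lemma Qfun_eq_stage_cost:
  "k < K \<Longrightarrow> Qfun A W C \<gamma> K k S H = stage_cost (opt_value (K - Suc k)) S H"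
  by (simp add: Qfun_def Suc_diff_Suc flip: Qr_Suc_eq_stage_cost)

lemma Qr_Suc_eq:
  fixes H :: "'m \<Rightarrow> real^'t^'r"
  assumes "pd_mat S"
  shows "Qr A W C \<gamma> (Suc n) S H p = trace S + sched_cost \<gamma> C p + trace (fmap A C S p H)
    + real (Suc n) * trace W + Dr A W C \<gamma> n S H p"
  using assms
proof (induction n arbitrary: S H p)
  case 0
  then show ?case
    unfolding Qr_Suc_eq_stage_cost stage_cost_def opt_value_0 by (simp add: trace_add)
next
  case (Suc n)
  define S' where "S' = fmap A C S p H + W"
  have S': "pd_mat S'" unfolding S'_def by (rule pd_mat_fmap_add[OF Suc.prems W_pd])
  define c where "c = trace S' + real (Suc n) * trace W"
  define h where "h (H' :: 'm \<Rightarrow> real^'t^'r) p'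
    = sched_cost \<gamma> C p' + trace (fmap A C S' p' H') + Dr A W C \<gamma> n S' H' p'" for H' p'
  have "Qr A W C \<gamma> (Suc n) S' H' = (\<lambda>p'. h H' p' + c)" for H'
    using Suc.IH[OF S'] by (simp add: fun_eq_iff c_def h_def algebra_simps del: Qr.simps)
  then have Min_eq: "Min (range (Qr A W C \<gamma> (Suc n) S' H')) = c + Min (range (h H'))" for H'
    using Min_add_commute[of UNIV "h H'" c] by simp
  have "integrable \<mu> (\<lambda>H'. c + Min (range (h H')))"
    using trace_dominated_bellman(2)[OF trace_dominated_opt_value S', of n]
    unfolding Qr_Suc_eq_stage_cost[symmetric] Min_eq .
  then have "opt_value (Suc n) S' = c + (\<integral>H'. Min (range (h H')) \<partial>\<mu>)"
    unfolding opt_value_def Min_eq by (rule integral_const_add)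
  also have "(\<integral>H'. Min (range (h H')) \<partial>\<mu>) = Dr A W C \<gamma> (Suc n) S H p"
    unfolding h_def S'_def by (simp add: \<mu>_gauss)
  finally show ?case
    by (simp add: Qr_Suc_eq_stage_cost stage_cost_def S'_def c_def trace_add algebra_simps)
qed

lemma cost_J_eq_expected_cost: "cost_J A W C \<gamma> K pol S0 = expected_cost pol S0 K trace"
  unfolding cost_J_def expected_cost_def path_cost_def total_cost_def \<mu>_gauss[symmetric] ..

lemma Qfun_decomposition:
  fixes H :: "'m \<Rightarrow> real^'t^'r"
  assumes "k < K" "pd_mat S"
  shows "Qfun A W C \<gamma> K k S H p
    = trace S + sched_cost \<gamma> C p + trace (fmap A C S p H) + real (K - k) * trace W
      + Delta A W C \<gamma> K k S H p * of_bool (k + 2 \<le> K)"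
proof -
  define n where "n = K - 1 - k"
  have Kk: "K - k = Suc n" using assms(1) n_def by simp
  have "Delta A W C \<gamma> K k S H p * of_bool (k + 2 \<le> K) = Dr A W C \<gamma> n S H p"
    using assms(1) unfolding n_def by (cases "k + 2 \<le> K") (simp_all add: Delta_def)
  then show ?thesis
    unfolding Qfun_def Kk using Qr_Suc_eq[OF assms(2)] by simp
qed

lemma Qfun_threshold_rule:
  fixes H :: "'m \<Rightarrow> real^'t^'r"
  assumes k: "k < K" and S: "pd_mat S"
    and opt: "\<forall>p'. Qfun A W C \<gamma> K k S H p \<le> Qfun A W C \<gamma> K k S H p'"
  shows "let ineq = (trace (fmap A C S (p(m := False)) H) + Delta A W C \<gamma> K k S H (p(m := False))
                     - trace (fmap A C S (p(m := True)) H) - Delta A W C \<gamma> K k S H (p(m := True))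
                     \<ge> trace (\<gamma> *\<^sub>R (C m ** transpose (C m))))
         in (p m \<longrightarrow> ineq)
            \<and> (ineq \<longrightarrow> (\<forall>p'. Qfun A W C \<gamma> K k S H (p(m := True)) \<le> Qfun A W C \<gamma> K k S H p'))"
proof -
  have D: "Delta A W C \<gamma> K k S H q * of_bool (k + 2 \<le> K) = Delta A W C \<gamma> K k S H q" for q
    using k by (cases "k + 2 \<le> K") (simp_all add: Delta_def)
  have "(trace (fmap A C S (p(m := False)) H) + Delta A W C \<gamma> K k S H (p(m := False))
          - trace (fmap A C S (p(m := True)) H) - Delta A W C \<gamma> K k S H (p(m := True))
          \<ge> trace (\<gamma> *\<^sub>R (C m ** transpose (C m))))
      \<longleftrightarrow> Qfun A W C \<gamma> K k S H (p(m := True)) \<le> Qfun A W C \<gamma> K k S H (p(m := False))"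
    unfolding Qfun_decomposition[OF k S] D sched_cost_fun_upd_True by linarith
  with minimizer_fun_upd_True[OF opt] show ?thesis
    unfolding Let_def by blast
qed

lemma cost_J_optimal:
  fixes polopt pol :: "nat \<Rightarrow> real^'s^'s \<Rightarrow> ('m \<Rightarrow> real^'t^'r) \<Rightarrow> ('m \<Rightarrow> bool)"
  assumes polopt: "adm_policy polopt" and S0: "pd_mat S0"
    and polopt_min: "\<forall>k<K. \<forall>S H p. pd_mat S \<longrightarrow>
                       Qfun A W C \<gamma> K k S H (polopt k S H) \<le> Qfun A W C \<gamma> K k S H p"
  shows "cost_J A W C \<gamma> K polopt S0
      = (\<integral>H. Min (range (\<lambda>p. Qfun A W C \<gamma> K 0 S0 (H :: 'm \<Rightarrow> real^'t^'r) p)) \<partial>gauss_chan)"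
    and "adm_policy pol \<Longrightarrow> cost_J A W C \<gamma> K polopt S0 \<le> cost_J A W C \<gamma> K pol S0"
proof -
  have "expected_cost polopt S0 K (opt_value 0) = opt_value (K + 0) S0"
    using polopt_min
    by (intro expected_cost_eq_value[where V=opt_value,
          OF opt_value_Suc trace_dominated_opt_value polopt S0])
      (simp add: Qfun_eq_stage_cost)
  then have cost_opt: "cost_J A W C \<gamma> K polopt S0 = opt_value K S0"
    by (simp add: cost_J_eq_expected_cost opt_value_0)
  then show "cost_J A W C \<gamma> K polopt S0
      = (\<integral>H. Min (range (\<lambda>p. Qfun A W C \<gamma> K 0 S0 (H :: 'm \<Rightarrow> real^'t^'r) p)) \<partial>gauss_chan)"
    by (simp add: opt_value_def Qfun_def flip: \<mu>_gauss)
  assume "adm_policy pol"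
  from value_le_expected_cost[where V=opt_value,
      OF opt_value_Suc trace_dominated_opt_value this S0, of K 0]
  show "cost_J A W C \<gamma> K polopt S0 \<le> cost_J A W C \<gamma> K pol S0"
    unfolding cost_opt unfolding cost_J_eq_expected_cost by (simp add: opt_value_0)
qed

end

theorem theorem1:
  fixes A W S0 :: "real^'s^'s"
    and C :: "'m::finite \<Rightarrow> real^'s^'t"
    and \<gamma> :: real and K :: nat
    and polopt :: "nat \<Rightarrow> real^'s^'s \<Rightarrow> ('m \<Rightarrow> real^'t^'r) \<Rightarrow> ('m \<Rightarrow> bool)"
  assumes gamma_pos: "\<gamma> > 0"
    and W_pd: "pd_mat W"
    and S0_pd: "pd_mat S0"
    and polopt_adm: "adm_policy polopt"
    and polopt_min: "\<forall>k<K. \<forall>S H p. pd_mat S \<longrightarrow>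
                       Qfun A W C \<gamma> K k S H (polopt k S H) \<le> Qfun A W C \<gamma> K k S H p"
  shows
    "(\<forall>pol :: nat \<Rightarrow> real^'s^'s \<Rightarrow> ('m \<Rightarrow> real^'t^'r) \<Rightarrow> ('m \<Rightarrow> bool). adm_policy pol \<longrightarrow> cost_J A W C \<gamma> K polopt S0 \<le> cost_J A W C \<gamma> K pol S0)
     \<and> cost_J A W C \<gamma> K polopt S0
         = (\<integral>H. Min (range (\<lambda>p. Qfun A W C \<gamma> K 0 S0 (H :: 'm \<Rightarrow> real^'t^'r) p)) \<partial>gauss_chan)
     \<and> (\<forall>k<K. \<forall>S (H :: 'm \<Rightarrow> real^'t^'r) p. pd_mat S \<longrightarrow>
          Qfun A W C \<gamma> K k S H p
            = trace S + sched_cost \<gamma> C p + trace (fmap A C S p H)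
              + real (K - k) * trace W
              + Delta A W C \<gamma> K k S H p * of_bool (k + 2 \<le> K))
     \<and> (\<forall>k<K. \<forall>S (H :: 'm \<Rightarrow> real^'t^'r) p m. pd_mat S \<longrightarrow> (\<forall>p'. Qfun A W C \<gamma> K k S H p \<le> Qfun A W C \<gamma> K k S H p') \<longrightarrow>
          (let ineq = (trace (fmap A C S (p(m := False)) H) + Delta A W C \<gamma> K k S H (p(m := False))
                       - trace (fmap A C S (p(m := True)) H) - Delta A W C \<gamma> K k S H (p(m := True))
                       \<ge> trace (\<gamma> *\<^sub>R (C m ** transpose (C m))))
           in (p m \<longrightarrow> ineq)
              \<and> (ineq \<longrightarrow> (\<forall>p'. Qfun A W C \<gamma> K k S H (p(m := True)) \<le> Qfun A W C \<gamma> K k S H p'))))"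
proof -
  interpret gauss_sched_dp "gauss_chan :: ('m \<Rightarrow> real^'t^'r) measure" A W C \<gamma>
    using prob_space_gauss_chan sets_gauss_chan gamma_pos W_pd
    by (simp add: gauss_sched_dp_def gauss_sched_dp_axioms_def sched_dp_def sched_dp_axioms_def)
  show ?thesis
    using cost_J_optimal[OF polopt_adm S0_pd polopt_min] Qfun_decomposition Qfun_threshold_rule
    by blast
qed

end
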